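(* Let $n,m\ge 2$, $\phi\in(0,1]$, and let $p_M(n,m,\phi)$ be the probability that an $(n,m)$-election generated by the Mallows model with dispersion parameter $\phi$ (and any reference vote) is single-peaked. Then $$p_M(n,m,\phi)\ge\left(\frac{1+\phi(m-1)+\phi^2(m-2)(m-3)/2}{Z}\right)^n,\qquad Z=\prod_{j=1}^{m}\left(1+\phi+\cdots+\phi^{j-1}\right).$$
   Context: For total orders $V,W$ on a candidate set $C$, the Kendall tau distance $\kappa(V,W)$ is the number of unordered pairs $\{c,c'\}\subseteq C$ ordered differently by $V$ and $W$. Mallows model on a set $C$ of $m$ candidates with reference vote $V$ and dispersion $\phi\in(0,1]$: each of the $n$ votes of the election is drawn independently, a total order $W$ being chosen with probability $\phi^{\kappa(V,W)}/Z$, where $Z=\sum_{W}\phi^{\kappa(V,W)}=\prod_{j=1}^{m}(1+\phi+\cdots+\phi^{j-1})$. Given a total order $A$ on $C$, a vote contains a valley with respect to $A$ on $c_1,c_2,c_3$ if $c_2$ lies strictly between $c_1$ and $c_3$ in $A$ and the vote ranks $c_2$ below both $c_1$ and $c_3$. An election is single-peaked if there is a total order $A$ on $C$ such that no vote contains a valley with respect to $A$. *)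

theory Defs
  imports Complex_Main "HOL-Combinatorics.Multiset_Permutations"
begin

text \<open>A vote (total order) on a finite candidate set C is a list that enumerates C
  without repetition; the head of the list is the most preferred candidate.\<close>

definition ranks_above :: "'a list \<Rightarrow> 'a \<Rightarrow> 'a \<Rightarrow> bool" where
  "ranks_above W a b \<longleftrightarrow> (\<exists>i j. i < j \<and> j < length W \<and> W ! i = a \<and> W ! j = b)"

text \<open>Kendall tau distance: number of unordered pairs ordered differently
  (each such pair counted once as the ordered pair (a,b) with a above b in V).\<close>
definition kendall_tau :: "'a list \<Rightarrow> 'a list \<Rightarrow> nat" where
  "kendall_tau V W = card {(a, b). ranks_above V a b \<and> ranks_above W b a}"

definition mallows_Z :: "'a set \<Rightarrow> 'a list \<Rightarrow> real \<Rightarrow> real" where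
  "mallows_Z C V phi = (\<Sum>W\<in>permutations_of_set C. phi ^ kendall_tau V W)"

definition mallows_prob :: "'a set \<Rightarrow> 'a list \<Rightarrow> real \<Rightarrow> 'a list \<Rightarrow> real" where
  "mallows_prob C V phi W = phi ^ kendall_tau V W / mallows_Z C V phi"

definition has_valley :: "'a list \<Rightarrow> 'a list \<Rightarrow> 'a \<Rightarrow> 'a \<Rightarrow> 'a \<Rightarrow> bool" where
  "has_valley A W c1 c2 c3 \<longleftrightarrow>
     ((ranks_above A c1 c2 \<and> ranks_above A c2 c3) \<or> (ranks_above A c3 c2 \<and> ranks_above A c2 c1))
     \<and> ranks_above W c1 c2 \<and> ranks_above W c3 c2"

definition single_peaked :: "'a set \<Rightarrow> 'a list list \<Rightarrow> bool" where
  "single_peaked C E \<longleftrightarrow> (\<exists>A\<in>permutations_of_set C.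
      \<forall>W\<in>set E. \<not> (\<exists>c1 c2 c3. has_valley A W c1 c2 c3))"

definition elections :: "'a set \<Rightarrow> nat \<Rightarrow> 'a list list set" where
  "elections C n = {E. length E = n \<and> set E \<subseteq> permutations_of_set C}"

definition prob_single_peaked_mallows :: "'a set \<Rightarrow> 'a list \<Rightarrow> real \<Rightarrow> nat \<Rightarrow> real" where
  "prob_single_peaked_mallows C V phi n =
     (\<Sum>E\<in>{E\<in>elections C n. single_peaked C E}. \<Prod>W\<leftarrow>E. mallows_prob C V phi W)"

end

theory Submission
  imports Defs
begin

text \<open>An election whose votes all avoid valleys with respect to one common axis is single-peaked,
  so the probability is at least the n-th power of the Mallows mass of any set of votes that are
  valley-free for a fixed axis. Number the candidates 0, ..., m-1
  by their position in the reference vote V and take the zigzag axis ..., 5, 3, 1, 0, 2, 4, ...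
  The vote V, the m-1 votes obtained from V by swapping two adjacent positions, and the
  (m-2)(m-3)/2 votes obtained by two disjoint adjacent swaps have Kendall distance 0, 1 and 2
  from V, and none of them has a valley on the zigzag axis: in such a vote, a candidate at
  position p is ranked below only candidates at positions smaller than p and possibly the one
  at p+1, and no two of these lie on opposite sides of p on the axis. Finally, peeling off the top
  candidate of a vote shows that the Mallows normalising constant factorises as
  \<Prod>j=1..m. \<Sum>i<j. phi^i.\<close>

lemma ranks_above_Nil [simp]: "\<not> ranks_above [] a b"
  by (simp add: ranks_above_def)

lemma ranks_above_Cons:
  "ranks_above (x # xs) a b \<longleftrightarrow> (a = x \<and> b \<in> set xs) \<or> ranks_above xs a b"
proof
  assume "ranks_above (x # xs) a b"
  then obtain i j where ij: "i < j" "j < length (x # xs)" "(x # xs) ! i = a" "(x # xs) ! j = b"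
    unfolding ranks_above_def by blast
  then obtain j' where j: "j = Suc j'" by (cases j) auto
  show "(a = x \<and> b \<in> set xs) \<or> ranks_above xs a b"
  proof (cases i)
    case 0
    then show ?thesis using ij j by auto
  next
    case (Suc i')
    then have "ranks_above xs a b" unfolding ranks_above_def using ij j
      by (intro exI[of _ i'] exI[of _ j']) auto
    then show ?thesis by blast
  qed
next
  assume "(a = x \<and> b \<in> set xs) \<or> ranks_above xs a b"
  then show "ranks_above (x # xs) a b"
  proof
    assume h: "a = x \<and> b \<in> set xs"
    then obtain j where "j < length xs" "xs ! j = b" by (auto simp: in_set_conv_nth)
    then show ?thesis unfolding ranks_above_def using h
      by (intro exI[of _ 0] exI[of _ "Suc j"]) auto
  next
    assume "ranks_above xs a b"
    then obtain i j where "i < j" "j < length xs" "xs ! i = a" "xs ! j = b"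
      unfolding ranks_above_def by blast
    then show ?thesis unfolding ranks_above_def
      by (intro exI[of _ "Suc i"] exI[of _ "Suc j"]) auto
  qed
qed

lemma ranks_above_in_set: "ranks_above xs a b \<Longrightarrow> a \<in> set xs \<and> b \<in> set xs"
  by (induction xs) (auto simp: ranks_above_Cons)

lemma ranks_above_irrefl: "distinct xs \<Longrightarrow> \<not> ranks_above xs a a"
  by (induction xs) (auto simp: ranks_above_Cons dest: ranks_above_in_set)

lemma ranks_above_removeAll:
  "distinct xs \<Longrightarrow> ranks_above (removeAll y xs) a b \<longleftrightarrow> ranks_above xs a b \<and> a \<noteq> y \<and> b \<noteq> y"
  by (induction xs) (auto simp: ranks_above_Cons dest: ranks_above_in_set)

lemma ranks_above_nth_iff:
  assumes "distinct V" "p < length V" "q < length V"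
  shows "ranks_above V (V ! p) (V ! q) \<longleftrightarrow> p < q"
  using assms unfolding ranks_above_def by (auto simp: nth_eq_iff_index_eq)

lemma ranks_above_map_sorted_wrt:
  assumes srt: "sorted_wrt R xs" and asym: "\<And>x y. R x y \<Longrightarrow> \<not> R y x"
    and inj: "inj_on f X" and sx: "set xs \<subseteq> X" and pq: "p \<in> X" "q \<in> X"
  shows "ranks_above (map f xs) (f p) (f q) \<longleftrightarrow> p \<in> set xs \<and> q \<in> set xs \<and> R p q"
proof
  assume "ranks_above (map f xs) (f p) (f q)"
  then obtain i j where ij: "i < j" "j < length xs" "f (xs ! i) = f p" "f (xs ! j) = f q"
    unfolding ranks_above_def by auto
  have "xs ! i \<in> X" "xs ! j \<in> X" using ij sx by auto
  then have "xs ! i = p" "xs ! j = q" using ij inj pq by (auto dest: inj_onD)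
  then show "p \<in> set xs \<and> q \<in> set xs \<and> R p q"
    using ij srt by (auto simp: sorted_wrt_iff_nth_less)
next
  assume h: "p \<in> set xs \<and> q \<in> set xs \<and> R p q"
  then obtain i j where ij: "i < length xs" "xs ! i = p" "j < length xs" "xs ! j = q"
    by (auto simp: in_set_conv_nth)
  have "i < j"
  proof (rule ccontr)
    assume "\<not> i < j"
    then have "j < i \<or> j = i" by auto
    then show False
    proof
      assume "j < i"
      then have "R q p" using srt ij by (auto simp: sorted_wrt_iff_nth_less)
      then show False using h asym by blast
    qed (use h ij asym in auto)
  qed
  then show "ranks_above (map f xs) (f p) (f q)" unfolding ranks_above_def using ij
    by (intro exI[of _ i] exI[of _ j]) auto
qed

section \<open>The Mallows normalising constant\<close>

lemma sum_power_card_ranks_above: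
  fixes phi :: real
  shows "distinct V \<Longrightarrow> (\<Sum>y\<in>set V. phi ^ card {a. ranks_above V a y}) = (\<Sum>i<length V. phi ^ i)"
proof (induction V)
  case Nil
  then show ?case by simp
next
  case (Cons v V)
  have v: "v \<notin> set V" "distinct V" using Cons.prems by auto
  have top: "{a. ranks_above (v # V) a v} = {}"
    using v by (auto simp: ranks_above_Cons dest: ranks_above_in_set)
  have below: "card {a. ranks_above (v # V) a y} = Suc (card {a. ranks_above V a y})"
    if "y \<in> set V" for y
  proof -
    have "{a. ranks_above (v # V) a y} = insert v {a. ranks_above V a y}"
      using that by (auto simp: ranks_above_Cons)
    moreover have "finite {a. ranks_above V a y}"
      by (rule finite_subset[of _ "set V"]) (auto dest: ranks_above_in_set)
    moreover have "v \<notin> {a. ranks_above V a y}" using v by (auto dest: ranks_above_in_set)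
    ultimately show ?thesis by simp
  qed
  have "(\<Sum>y\<in>set (v # V). phi ^ card {a. ranks_above (v # V) a y})
      = 1 + (\<Sum>y\<in>set V. phi ^ card {a. ranks_above (v # V) a y})"
    using v top by simp
  also have "(\<Sum>y\<in>set V. phi ^ card {a. ranks_above (v # V) a y})
      = phi * (\<Sum>y\<in>set V. phi ^ card {a. ranks_above V a y})"
    by (simp add: sum_distrib_left below cong: sum.cong)
  also have "\<dots> = phi * (\<Sum>i<length V. phi ^ i)" using Cons v by simp
  finally show ?case by (simp only: sum.lessThan_Suc_shift length_Cons) (simp add: sum_distrib_left)
qed

lemma kendall_tau_Cons:
  assumes dV: "distinct V" and y: "y \<in> set V" and dW: "distinct (y # W)" and sW: "set (y # W) = set V"
  shows "kendall_tau V (y # W) = card {a. ranks_above V a y} + kendall_tau (removeAll y V) W"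
proof -
  let ?K = "{(a, b). ranks_above V a b \<and> ranks_above (y # W) b a}"
  let ?A = "(\<lambda>a. (a, y)) ` {a. ranks_above V a y}"
  let ?B = "{(a, b). ranks_above (removeAll y V) a b \<and> ranks_above W b a}"
  have "?K = ?A \<union> ?B"
  proof (intro equalityI subsetI)
    fix p assume "p \<in> ?K"
    then obtain a b where p: "p = (a, b)" "ranks_above V a b" "ranks_above (y # W) b a" by auto
    then have "(b = y \<and> a \<in> set W) \<or> ranks_above W b a" by (simp add: ranks_above_Cons)
    then show "p \<in> ?A \<union> ?B"
    proof
      assume "ranks_above W b a"
      moreover from this have "a \<noteq> y" "b \<noteq> y" using dW by (auto dest: ranks_above_in_set)
      ultimately show ?thesis using p dV by (auto simp: ranks_above_removeAll)
    qed (use p in auto)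
  next
    fix p assume "p \<in> ?A \<union> ?B"
    then show "p \<in> ?K"
    proof
      assume "p \<in> ?A"
      then obtain a where p: "p = (a, y)" "ranks_above V a y" by auto
      have "a \<noteq> y" using p(2) dV ranks_above_irrefl by metis
      moreover have "a \<in> set V" using p(2) ranks_above_in_set by metis
      ultimately show ?thesis using p sW by (auto simp: ranks_above_Cons)
    qed (use dV in \<open>auto simp: ranks_above_removeAll ranks_above_Cons\<close>)
  qed
  moreover have "finite ?A"
    by (rule finite_imageI, rule finite_subset[of _ "set V"]) (auto dest: ranks_above_in_set)
  moreover have "finite ?B"
    by (rule finite_subset[of _ "set V \<times> set V"])
      (auto dest: ranks_above_in_set simp: ranks_above_removeAll dV)
  moreover have "?A \<inter> ?B = {}" using dW by (auto dest: ranks_above_in_set)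
  moreover have "card ?A = card {a. ranks_above V a y}" by (rule card_image) (auto simp: inj_on_def)
  ultimately show ?thesis unfolding kendall_tau_def by (simp add: card_Un_disjoint)
qed

lemma mallows_Z_eq_prod:
  fixes phi :: real
  shows "distinct V \<Longrightarrow> set V = C \<Longrightarrow> mallows_Z C V phi = (\<Prod>j=1..card C. \<Sum>i<j. phi ^ i)"
proof (induction "length V" arbitrary: V C)
  case 0
  then show ?case by (simp add: mallows_Z_def kendall_tau_def)
next
  case (Suc k)
  have fC: "finite C" using Suc.prems by auto
  have cC: "card C = Suc k" using Suc.hyps Suc.prems distinct_card by fastforce
  then have ne: "C \<noteq> {}" by auto
  have IH: "mallows_Z (C - {y}) (removeAll y V) phi = (\<Prod>j=1..k. \<Sum>i<j. phi ^ i)" if "y \<in> C" for y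
  proof -
    have "distinct (removeAll y V)" "set (removeAll y V) = C - {y}"
      using Suc.prems by (auto simp: distinct_removeAll)
    moreover from this have "length (removeAll y V) = k"
      using Suc.hyps Suc.prems that by (metis One_nat_def cC card_Diff_singleton diff_Suc_1 distinct_card)
    moreover have "card (C - {y}) = k" using cC that fC by simp
    ultimately show ?thesis using Suc.hyps(1) by metis
  qed
  have "mallows_Z C V phi
      = (\<Sum>y\<in>C. \<Sum>W\<in>(\<lambda>xs. y # xs) ` permutations_of_set (C - {y}). phi ^ kendall_tau V W)"
    unfolding mallows_Z_def permutations_of_set_nonempty[OF ne]
    by (rule sum.UNION_disjoint) (auto simp: fC)
  also have "\<dots> = (\<Sum>y\<in>C. \<Sum>W\<in>permutations_of_set (C - {y}). phi ^ kendall_tau V (y # W))"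
    by (rule sum.cong[OF refl], subst sum.reindex) (auto simp: inj_on_def)
  also have "\<dots> = (\<Sum>y\<in>C. phi ^ card {a. ranks_above V a y} * mallows_Z (C - {y}) (removeAll y V) phi)"
    unfolding mallows_Z_def sum_distrib_left
  proof (intro sum.cong refl)
    fix y W assume "y \<in> C" "W \<in> permutations_of_set (C - {y})"
    then have "kendall_tau V (y # W) = card {a. ranks_above V a y} + kendall_tau (removeAll y V) W"
      using Suc.prems by (intro kendall_tau_Cons) (auto dest: permutations_of_setD)
    then show "phi ^ kendall_tau V (y # W)
        = phi ^ card {a. ranks_above V a y} * phi ^ kendall_tau (removeAll y V) W"
      by (simp add: power_add)
  qed
  also have "\<dots> = (\<Sum>y\<in>C. phi ^ card {a. ranks_above V a y}) * (\<Prod>j=1..k. \<Sum>i<j. phi ^ i)"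
    by (simp add: IH sum_distrib_right cong: sum.cong)
  also have "(\<Sum>y\<in>C. phi ^ card {a. ranks_above V a y}) = (\<Sum>i<Suc k. phi ^ i)"
    using sum_power_card_ranks_above[of V phi] Suc by simp
  finally show ?case using cC by (simp add: prod.nat_ivl_Suc' mult.commute)
qed

section \<open>Reduction to a set of valley-free votes\<close>

lemma sum_prod_list_lists_length:
  fixes g :: "'b \<Rightarrow> real"
  assumes "finite S"
  shows "(\<Sum>E\<in>{E. length E = n \<and> set E \<subseteq> S}. \<Prod>W\<leftarrow>E. g W) = (\<Sum>W\<in>S. g W) ^ n"
proof (induction n)
  case 0
  have "{E. length E = 0 \<and> set E \<subseteq> S} = {[]}" by auto
  then show ?case by simp
next
  case (Suc n)
  let ?L = "{E. length E = n \<and> set E \<subseteq> S}"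
  have cons: "{E. length E = Suc n \<and> set E \<subseteq> S} = (\<lambda>(x, xs). x # xs) ` (S \<times> ?L)"
    by (auto simp: length_Suc_conv)
  have "finite ?L" using finite_lists_length_eq[OF assms, of n] by (simp add: conj_commute)
  have "(\<Sum>E\<in>{E. length E = Suc n \<and> set E \<subseteq> S}. \<Prod>W\<leftarrow>E. g W)
      = (\<Sum>p\<in>S \<times> ?L. g (fst p) * (\<Prod>W\<leftarrow>snd p. g W))"
    unfolding cons by (subst sum.reindex) (auto simp: inj_on_def intro!: sum.cong)
  also have "\<dots> = (\<Sum>x\<in>S. \<Sum>xs\<in>?L. g x * (\<Prod>W\<leftarrow>xs. g W))"
    by (subst sum.cartesian_product) (simp add: case_prod_unfold)
  also have "\<dots> = (\<Sum>x\<in>S. g x) * (\<Sum>xs\<in>?L. \<Prod>W\<leftarrow>xs. g W)"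
    by (simp add: sum_product)
  finally show ?case using Suc by simp
qed

lemma mallows_prob_nonneg:
  fixes phi :: real
  shows "0 \<le> phi \<Longrightarrow> 0 \<le> mallows_prob C V phi W"
  unfolding mallows_prob_def mallows_Z_def by (simp add: sum_nonneg)

lemma prob_single_peaked_mallows_ge_power:
  assumes "0 \<le> phi" and "A \<in> permutations_of_set C"
    and "S \<subseteq> permutations_of_set C" and "\<And>W c1 c2 c3. W \<in> S \<Longrightarrow> \<not> has_valley A W c1 c2 c3"
  shows "(\<Sum>W\<in>S. mallows_prob C V phi W) ^ n \<le> prob_single_peaked_mallows C V phi n"
proof -
  have S: "finite S" and "finite {E\<in>elections C n. single_peaked C E}"
    using assms(3) finite_lists_length_eq[of "permutations_of_set C" n]
    by (auto intro: finite_subset simp: elections_def conj_commute)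
  moreover have "{E. length E = n \<and> set E \<subseteq> S} \<subseteq> {E\<in>elections C n. single_peaked C E}"
    using assms(2-4) unfolding elections_def single_peaked_def by blast
  ultimately show ?thesis
    unfolding prob_single_peaked_mallows_def sum_prod_list_lists_length[OF S, symmetric]
    by (intro sum_mono2) (auto intro!: prod_list_nonneg mallows_prob_nonneg assms(1))
qed

section \<open>Votes obtained by permuting the positions of the reference vote\<close>

definition permute_vote :: "'a list \<Rightarrow> (nat \<Rightarrow> nat) \<Rightarrow> 'a list" where
  "permute_vote V s = map (\<lambda>k. V ! s k) [0..<length V]"

definition involution_on :: "nat \<Rightarrow> (nat \<Rightarrow> nat) \<Rightarrow> bool" where
  "involution_on m s \<longleftrightarrow> (\<forall>k<m. s k < m \<and> s (s k) = k)"

definition inversions :: "nat \<Rightarrow> (nat \<Rightarrow> nat) \<Rightarrow> (nat \<times> nat) set" where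
  "inversions m s = {(p, q). p < q \<and> q < m \<and> s q < s p}"

definition adjacent_inversions_only :: "nat \<Rightarrow> (nat \<Rightarrow> nat) \<Rightarrow> bool" where
  "adjacent_inversions_only m s \<longleftrightarrow> (\<forall>a<m. \<forall>b<m. s a < s b \<longrightarrow> a < b \<or> a = Suc b)"

lemma permute_vote_id: "permute_vote V id = V"
  by (simp add: permute_vote_def map_nth)

lemma ranks_above_permute_vote_iff:
  assumes d: "distinct V" and s: "involution_on (length V) s" and pq: "p < length V" "q < length V"
  shows "ranks_above (permute_vote V s) (V ! p) (V ! q) \<longleftrightarrow> s p < s q"
proof
  assume "ranks_above (permute_vote V s) (V ! p) (V ! q)"
  then obtain i j where ij: "i < j" "j < length V" "V ! s i = V ! p" "V ! s j = V ! q"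
    unfolding ranks_above_def permute_vote_def by auto
  have "s i < length V" "s j < length V" using s ij unfolding involution_on_def by auto
  then have "s i = p" "s j = q" using ij d pq by (auto simp: nth_eq_iff_index_eq)
  then have "s p = i" "s q = j" using s ij unfolding involution_on_def by auto
  then show "s p < s q" using ij by simp
next
  assume "s p < s q"
  moreover have "s p < length V" "s q < length V" "s (s p) = p" "s (s q) = q"
    using s pq unfolding involution_on_def by auto
  ultimately show "ranks_above (permute_vote V s) (V ! p) (V ! q)"
    unfolding ranks_above_def permute_vote_def by (intro exI[of _ "s p"] exI[of _ "s q"]) auto
qed

lemma permute_vote_in_permutations_of_set:
  assumes d: "distinct V" and s: "involution_on (length V) s"
  shows "permute_vote V s \<in> permutations_of_set (set V)"
proof
  show "distinct (permute_vote V s)" unfolding distinct_conv_nth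
  proof (intro allI impI)
    fix i j assume "i < length (permute_vote V s)" "j < length (permute_vote V s)" "i \<noteq> j"
    moreover from this have "s i \<noteq> s j" "s i < length V" "s j < length V"
      using s unfolding involution_on_def permute_vote_def by (metis length_map length_upt minus_nat.diff_0)+
    ultimately show "permute_vote V s ! i \<noteq> permute_vote V s ! j"
      using d by (simp add: permute_vote_def nth_eq_iff_index_eq)
  qed
  show "set (permute_vote V s) = set V"
  proof
    show "set (permute_vote V s) \<subseteq> set V"
      using s unfolding permute_vote_def involution_on_def by auto
    show "set V \<subseteq> set (permute_vote V s)"
    proof
      fix a assume "a \<in> set V"
      then obtain p where p: "p < length V" "a = V ! p" by (auto simp: in_set_conv_nth)
      then have "s p < length V" "s (s p) = p" using s unfolding involution_on_def by auto
      then show "a \<in> set (permute_vote V s)" unfolding permute_vote_def using p by force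
    qed
  qed
qed

lemma kendall_tau_permute_vote:
  assumes d: "distinct V" and s: "involution_on (length V) s"
  shows "kendall_tau V (permute_vote V s) = card (inversions (length V) s)"
proof -
  let ?f = "\<lambda>(p, q). (V ! p, V ! q)"
  have "{(a, b). ranks_above V a b \<and> ranks_above (permute_vote V s) b a}
      = ?f ` inversions (length V) s"
  proof (intro equalityI subsetI)
    fix x assume "x \<in> {(a, b). ranks_above V a b \<and> ranks_above (permute_vote V s) b a}"
    then obtain a b where h: "x = (a, b)" "ranks_above V a b" "ranks_above (permute_vote V s) b a"
      by blast
    then obtain p q where pq: "p < length V" "q < length V" "V ! p = a" "V ! q = b"
      by (meson in_set_conv_nth ranks_above_in_set)
    then have "(p, q) \<in> inversions (length V) s"
      using h ranks_above_nth_iff[OF d] ranks_above_permute_vote_iff[OF d s]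
      unfolding inversions_def by auto
    then show "x \<in> ?f ` inversions (length V) s" using pq h by force
  qed (use ranks_above_nth_iff[OF d] ranks_above_permute_vote_iff[OF d s] in
      \<open>auto simp: inversions_def\<close>)
  moreover have "inj_on ?f (inversions (length V) s)"
    using d unfolding inversions_def inj_on_def by (auto simp: nth_eq_iff_index_eq)
  ultimately show ?thesis unfolding kendall_tau_def by (simp add: card_image)
qed

lemma inversions_eq_if_permute_vote_eq:
  assumes d: "distinct V" and s: "involution_on (length V) s" and s': "involution_on (length V) s'"
    and e: "permute_vote V s = permute_vote V s'"
  shows "inversions (length V) s = inversions (length V) s'"
proof -
  have "s k = s' k" if "k < length V" for k
  proof -
    have "V ! s k = V ! s' k"
      using arg_cong[OF e, of "\<lambda>W. W ! k"] that by (simp add: permute_vote_def)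
    moreover have "s k < length V" "s' k < length V"
      using s s' that unfolding involution_on_def by auto
    ultimately show ?thesis using d by (simp add: nth_eq_iff_index_eq)
  qed
  then show ?thesis unfolding inversions_def by auto
qed

section \<open>The zigzag axis\<close>

definition zigzag_key :: "nat \<Rightarrow> int" where
  "zigzag_key p = (if odd p then - int p else int p)"

definition zigzag :: "nat \<Rightarrow> nat list" where
  "zigzag m = rev (filter odd [0..<m]) @ filter even [0..<m]"

definition zigzag_axis :: "'a list \<Rightarrow> 'a list" where
  "zigzag_axis V = map ((!) V) (zigzag (length V))"

lemma set_zigzag: "set (zigzag m) = {..<m}"
  by (auto simp: zigzag_def)

lemma distinct_zigzag: "distinct (zigzag m)"
  by (auto simp: zigzag_def)

lemma sorted_wrt_zigzag: "sorted_wrt (\<lambda>p q. zigzag_key p < zigzag_key q) (zigzag m)"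
proof -
  have "sorted_wrt (<) (filter odd [0..<m])" "sorted_wrt (<) (filter even [0..<m])"
    by (auto intro: sorted_wrt_filter)
  then have "sorted_wrt (\<lambda>p q. zigzag_key q < zigzag_key p) (filter odd [0..<m])"
      "sorted_wrt (\<lambda>p q. zigzag_key p < zigzag_key q) (filter even [0..<m])"
    by (auto elim!: sorted_wrt_mono_rel[rotated] simp: zigzag_key_def)
  then show ?thesis unfolding zigzag_def sorted_wrt_append sorted_wrt_rev
    by (auto simp: zigzag_key_def dest: odd_pos)
qed

lemma zigzag_axis_in_permutations_of_set:
  "distinct V \<Longrightarrow> zigzag_axis V \<in> permutations_of_set (set V)"
  unfolding zigzag_axis_def
  by (rule permutations_of_setI)
    (auto simp: set_zigzag distinct_map distinct_zigzag inj_on_nth in_set_conv_nth)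

lemma ranks_above_zigzag_axis_iff:
  assumes "distinct V" "p < length V" "q < length V"
  shows "ranks_above (zigzag_axis V) (V ! p) (V ! q) \<longleftrightarrow> zigzag_key p < zigzag_key q"
  unfolding zigzag_axis_def using assms
  by (subst ranks_above_map_sorted_wrt[OF sorted_wrt_zigzag, where X = "{..<length V}"])
    (auto simp: set_zigzag inj_on_nth)

lemma permute_vote_no_valley:
  assumes d: "distinct V" and s: "involution_on (length V) s"
    and adj: "adjacent_inversions_only (length V) s"
  shows "\<not> has_valley (zigzag_axis V) (permute_vote V s) c1 c2 c3"
proof
  assume h: "has_valley (zigzag_axis V) (permute_vote V s) c1 c2 c3"
  then have "c1 \<in> set V" "c2 \<in> set V" "c3 \<in> set V"
    using permutations_of_setD(1)[OF permute_vote_in_permutations_of_set[OF d s]]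
    unfolding has_valley_def by (auto dest!: ranks_above_in_set)
  then obtain p1 p2 p3 where p: "p1 < length V" "p2 < length V" "p3 < length V"
      "V ! p1 = c1" "V ! p2 = c2" "V ! p3 = c3" by (meson in_set_conv_nth)
  have between: "(zigzag_key p1 < zigzag_key p2 \<and> zigzag_key p2 < zigzag_key p3)
      \<or> (zigzag_key p3 < zigzag_key p2 \<and> zigzag_key p2 < zigzag_key p1)"
    and "s p1 < s p2" "s p3 < s p2"
    using h p(1-3) unfolding has_valley_def p(4-6)[symmetric]
    by (simp_all add: ranks_above_zigzag_axis_iff[OF d] ranks_above_permute_vote_iff[OF d s])
  then have "p1 < p2 \<or> p1 = Suc p2" "p3 < p2 \<or> p3 = Suc p2"
    using adj p unfolding adjacent_inversions_only_def by auto
  with between show False unfolding zigzag_key_def by (auto split: if_splits)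
qed

section \<open>Votes within two disjoint adjacent swaps of the reference vote\<close>

definition adj_swap :: "nat \<Rightarrow> nat \<Rightarrow> nat" where
  "adj_swap i p = (if p = i then Suc i else if p = Suc i then i else p)"

lemma id_swap_properties:
  "involution_on m id" "adjacent_inversions_only m id" "inversions m id = {}"
  by (auto simp: involution_on_def adjacent_inversions_only_def inversions_def)

lemma adj_swap_properties:
  assumes "Suc i < m"
  shows "involution_on m (adj_swap i)" "adjacent_inversions_only m (adj_swap i)"
    "inversions m (adj_swap i) = {(i, Suc i)}"
  using assms by (auto simp: involution_on_def adjacent_inversions_only_def inversions_def adj_swap_def)

lemma adj_swap_comp_properties:
  assumes "i + 2 \<le> j" "Suc j < m"
  shows "involution_on m (adj_swap i \<circ> adj_swap j)"
    "adjacent_inversions_only m (adj_swap i \<circ> adj_swap j)"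
    "inversions m (adj_swap i \<circ> adj_swap j) = {(i, Suc i), (j, Suc j)}"
proof -
  have E: "adj_swap i (adj_swap j p) = (if p = i then Suc i else if p = Suc i then i
      else if p = j then Suc j else if p = Suc j then j else p)" for p
    using assms(1) unfolding adj_swap_def by auto
  show "involution_on m (adj_swap i \<circ> adj_swap j)"
    using assms unfolding involution_on_def comp_apply E by auto
  show adj: "adjacent_inversions_only m (adj_swap i \<circ> adj_swap j)"
    using assms unfolding adjacent_inversions_only_def comp_apply E by (auto split: if_splits)
  show "inversions m (adj_swap i \<circ> adj_swap j) = {(i, Suc i), (j, Suc j)}"
  proof (intro equalityI subsetI)
    fix x assume "x \<in> inversions m (adj_swap i \<circ> adj_swap j)"
    then obtain a b where x: "x = (a, b)" "a < b" "b < m"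
      and inv: "(adj_swap i \<circ> adj_swap j) b < (adj_swap i \<circ> adj_swap j) a"
      unfolding inversions_def by auto
    then have "b = Suc a" using adj unfolding adjacent_inversions_only_def
      by (meson less_asym less_trans)
    then show "x \<in> {(i, Suc i), (j, Suc j)}" using assms x inv by (simp add: E split: if_splits)
  qed (use assms in \<open>auto simp: inversions_def E\<close>)
qed

definition double_swap_positions :: "nat \<Rightarrow> (nat \<times> nat) set" where
  "double_swap_positions m = {(i, j). i + 2 \<le> j \<and> Suc j < m}"

lemma card_double_swap_positions:
  "2 * card (double_swap_positions m) = (m - 2) * (m - 3)"
proof (induction m)
  case 0
  then show ?case by (simp add: double_swap_positions_def)
next
  case (Suc k)
  have split: "double_swap_positions (Suc k) = double_swap_positions k \<union> (\<lambda>i. (i, k - 1)) ` {..<k - 2}"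
    unfolding double_swap_positions_def by auto
  have "finite (double_swap_positions k)"
    by (rule finite_subset[of _ "{..<k} \<times> {..<k}"]) (auto simp: double_swap_positions_def)
  then have card: "card (double_swap_positions (Suc k)) = card (double_swap_positions k) + (k - 2)"
    unfolding split
    by (subst card_Un_disjoint) (auto simp: card_image inj_on_def double_swap_positions_def)
  show ?case
  proof (cases "k < 3")
    case True
    then have "double_swap_positions (Suc k) = {}" by (auto simp: double_swap_positions_def)
    then show ?thesis using True by simp
  next
    case False
    then obtain j where "k = j + 3" by (metis add.commute le_Suc_ex not_less)
    then show ?thesis using card Suc.IH by (simp add: algebra_simps)
  qed
qed

definition near_votes :: "'a list \<Rightarrow> 'a list set" where
  "near_votes V = insert V
     ((\<lambda>i. permute_vote V (adj_swap i)) ` {..<length V - 1}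
      \<union> (\<lambda>(i, j). permute_vote V (adj_swap i \<circ> adj_swap j)) ` double_swap_positions (length V))"

lemma near_votes_valley_free:
  assumes "distinct V" and "W \<in> near_votes V"
  shows "W \<in> permutations_of_set (set V)" and "\<not> has_valley (zigzag_axis V) W c1 c2 c3"
proof -
  obtain s where "W = permute_vote V s" "involution_on (length V) s"
    "adjacent_inversions_only (length V) s"
  proof -
    consider "W = V"
      | i where "i < length V - 1" "W = permute_vote V (adj_swap i)"
      | i j where "i + 2 \<le> j" "Suc j < length V" "W = permute_vote V (adj_swap i \<circ> adj_swap j)"
      using assms(2) unfolding near_votes_def double_swap_positions_def by auto
    then show thesis
    proof cases
      case 1
      then show ?thesis using that[of id] id_swap_properties permute_vote_id by metis
    next
      case 2
      then have "Suc i < length V" by simp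
      then show ?thesis using that 2(2) adj_swap_properties by metis
    next
      case 3
      then show ?thesis using that adj_swap_comp_properties by metis
    qed
  qed
  then show "W \<in> permutations_of_set (set V)" "\<not> has_valley (zigzag_axis V) W c1 c2 c3"
    using assms(1) permute_vote_in_permutations_of_set permute_vote_no_valley by simp_all
qed

lemma sum_near_votes:
  fixes phi :: real
  assumes d: "distinct V" and m: "length V = m" "m \<ge> 2"
  shows "(\<Sum>W\<in>near_votes V. phi ^ kendall_tau V W)
    = 1 + phi * (real m - 1) + phi ^ 2 * (real m - 2) * (real m - 3) / 2"
proof -
  define S1 where "S1 = (\<lambda>i. permute_vote V (adj_swap i)) ` {..<m - 1}"
  define S2 where "S2 = (\<lambda>(i, j). permute_vote V (adj_swap i \<circ> adj_swap j)) ` double_swap_positions m"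
  note swap1 = adj_swap_properties[of _ m, folded m(1)]
  note swap2 = adj_swap_comp_properties[of _ _ m, folded m(1)]
  have k0: "kendall_tau V V = 0"
    using kendall_tau_permute_vote[OF d, of id] id_swap_properties[of "length V"]
    by (simp add: permute_vote_id)
  have k1: "kendall_tau V W = 1" if "W \<in> S1" for W
    using that kendall_tau_permute_vote[OF d] swap1 m unfolding S1_def by auto
  have k2: "kendall_tau V W = 2" if "W \<in> S2" for W
    using that kendall_tau_permute_vote[OF d] swap2 m unfolding S2_def double_swap_positions_def
    by auto
  have inj1: "inj_on (\<lambda>i. permute_vote V (adj_swap i)) {..<m - 1}"
  proof (rule inj_onI)
    fix i i' assume "i \<in> {..<m - 1}" "i' \<in> {..<m - 1}"
      and e: "permute_vote V (adj_swap i) = permute_vote V (adj_swap i')"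
    then have i: "Suc i < length V" "Suc i' < length V" using m by auto
    have "{(i, Suc i)} = {(i', Suc i')}"
      using inversions_eq_if_permute_vote_eq[OF d swap1(1)[OF i(1)] swap1(1)[OF i(2)] e]
      unfolding swap1(3)[OF i(1)] swap1(3)[OF i(2)] .
    then show "i = i'" by simp
  qed
  have sum1: "(\<Sum>W\<in>S1. phi ^ kendall_tau V W) = phi * (real m - 1)"
    unfolding S1_def sum.reindex[OF inj1] using m k1[unfolded S1_def] by simp
  have inj2: "inj_on (\<lambda>(i, j). permute_vote V (adj_swap i \<circ> adj_swap j)) (double_swap_positions m)"
  proof (intro inj_onI, clarify)
    fix i j i' j'
    assume "(i, j) \<in> double_swap_positions m" "(i', j') \<in> double_swap_positions m"
      and e: "permute_vote V (adj_swap i \<circ> adj_swap j) = permute_vote V (adj_swap i' \<circ> adj_swap j')"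
    then have ij: "i + 2 \<le> j" "Suc j < length V" and ij': "i' + 2 \<le> j'" "Suc j' < length V"
      using m unfolding double_swap_positions_def by auto
    have "{(i, Suc i), (j, Suc j)} = {(i', Suc i'), (j', Suc j')}"
      using inversions_eq_if_permute_vote_eq[OF d swap2(1)[OF ij] swap2(1)[OF ij'] e]
      unfolding swap2(3)[OF ij] swap2(3)[OF ij'] .
    then show "i = i' \<and> j = j'" using ij ij' by (auto simp: doubleton_eq_iff)
  qed
  have "(\<Sum>W\<in>S2. phi ^ kendall_tau V W) = phi ^ 2 * real (card (double_swap_positions m))"
    unfolding S2_def sum.reindex[OF inj2] using k2[unfolded S2_def] by (simp add: case_prod_unfold)
  also have "real (card (double_swap_positions m)) = (real m - 2) * (real m - 3) / 2"
    using card_double_swap_positions[of m] m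
    by (cases "m = 2") (auto dest!: arg_cong[where f = real])
  finally have sum2: "(\<Sum>W\<in>S2. phi ^ kendall_tau V W) = phi ^ 2 * (real m - 2) * (real m - 3) / 2"
    by simp
  have "finite S2" unfolding S2_def double_swap_positions_def
    by (rule finite_imageI, rule finite_subset[of _ "{..<m} \<times> {..<m}"]) auto
  moreover have "S1 \<inter> S2 = {}" "V \<notin> S1 \<union> S2" using k0 k1 k2 by fastforce+
  ultimately have "(\<Sum>W\<in>near_votes V. phi ^ kendall_tau V W)
      = 1 + (\<Sum>W\<in>S1. phi ^ kendall_tau V W) + (\<Sum>W\<in>S2. phi ^ kendall_tau V W)"
    unfolding near_votes_def S1_def[symmetric] S2_def[symmetric] m(1) using k0
    by (simp add: S1_def sum.union_disjoint[symmetric])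
  then show ?thesis using sum1 sum2 by simp
qed

theorem mainTheorem12:
  fixes C :: "'a set" and V :: "'a list" and n m :: nat and phi :: real
  assumes "finite C" and "card C = m" and "n \<ge> 2" and "m \<ge> 2"
    and "0 < phi" and "phi \<le> 1"
    and "V \<in> permutations_of_set C"
  shows "prob_single_peaked_mallows C V phi n \<ge>
    ((1 + phi * (real m - 1) + phi ^ 2 * (real m - 2) * (real m - 3) / 2)
      / (\<Prod>j=1..m. \<Sum>i<j. phi ^ i)) ^ n"
proof -
  \<comment> \<open>The bound holds for all n and all phi \<ge> 0.\<close>
  have d: "distinct V" and C: "C = set V" using assms(7) by (auto dest: permutations_of_setD)
  have m: "length V = m" using d C assms(2) distinct_card by fastforce
  have "(\<Sum>W\<in>near_votes V. mallows_prob C V phi W)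
      = (\<Sum>W\<in>near_votes V. phi ^ kendall_tau V W) / mallows_Z C V phi"
    unfolding mallows_prob_def by (simp add: sum_divide_distrib)
  also have "\<dots> = (1 + phi * (real m - 1) + phi ^ 2 * (real m - 2) * (real m - 3) / 2)
      / (\<Prod>j=1..m. \<Sum>i<j. phi ^ i)"
    using sum_near_votes[OF d m assms(4)] mallows_Z_eq_prod[OF d C[symmetric]] assms(2) by simp
  finally have mass: "(\<Sum>W\<in>near_votes V. mallows_prob C V phi W)
      = (1 + phi * (real m - 1) + phi ^ 2 * (real m - 2) * (real m - 3) / 2)
        / (\<Prod>j=1..m. \<Sum>i<j. phi ^ i)" .
  have "near_votes V \<subseteq> permutations_of_set C"
    using near_votes_valley_free(1)[OF d] C by blast
  then show ?thesis
    unfolding mass[symmetric] using prob_single_peaked_mallows_ge_power[where A = "zigzag_axis V" and S = "near_votes V"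
        and C = C and V = V and phi = phi and n = n]
      zigzag_axis_in_permutations_of_set[OF d] near_votes_valley_free(2)[OF d] assms(5) C
    by simp
qed

end
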